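(* Let $X,Y$ be Banach spaces and $N$ an absolute normalized norm on $\mathbb R^2$. (1) If $x\in S_X$ and $y\in S_Y$ are super $\Delta$-points, then $(ax,by)$ is a super $\Delta$-point of $X\oplus_NY$ for every $(a,b)\in\mathbb R^2$ with $N(a,b)=1$. (2) If $x\in S_X$ is a super $\Delta$-point then $(x,0)$ is a super $\Delta$-point of $X\oplus_NY$; if $y\in S_Y$ is a super $\Delta$-point then $(0,y)$ is a super $\Delta$-point of $X\oplus_NY$.
   Context: A norm $N$ on $\mathbb R^2$ is absolute if $N(a,b)=N(|a|,|b|)$ and normalized if $N(1,0)=N(0,1)=1$. $X\oplus_NY$ is $X\times Y$ with norm $\|(x,y)\|=N(\|x\|,\|y\|)$. An element $x\in S_X$ is a super $\Delta$-point if $\sup_{z\in V}\|x-z\|=2$ for every relatively weakly open subset $V$ of $B_X$ containing $x$. *)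

theory Defs
  imports "HOL-Analysis.Analysis"
begin

definition is_norm_R2 :: "(real \<times> real \<Rightarrow> real) \<Rightarrow> bool" where
  "is_norm_R2 N \<longleftrightarrow>
     (\<forall>v. 0 \<le> N v) \<and> (\<forall>v. N v = 0 \<longleftrightarrow> v = (0,0)) \<and>
     (\<forall>c a b. N (c * a, c * b) = \<bar>c\<bar> * N (a, b)) \<and>
     (\<forall>a b c d. N (a + c, b + d) \<le> N (a, b) + N (c, d))"

definition absolute_normalized_norm :: "(real \<times> real \<Rightarrow> real) \<Rightarrow> bool" where
  "absolute_normalized_norm N \<longleftrightarrow> is_norm_R2 N \<and>
     (\<forall>a b. N (a, b) = N (\<bar>a\<bar>, \<bar>b\<bar>)) \<and> N (1, 0) = 1 \<and> N (0, 1) = 1"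

definition sum_norm :: "(real \<times> real \<Rightarrow> real) \<Rightarrow> ('a::real_normed_vector \<times> 'b::real_normed_vector) \<Rightarrow> real" where
  "sum_norm N p = N (norm (fst p), norm (snd p))"

definition weak_open_wrt :: "('a::real_vector \<Rightarrow> real) \<Rightarrow> 'a set \<Rightarrow> bool" where
  "weak_open_wrt nrm = generate_topology
     {{z. f z \<in> U} | f U. linear f \<and> (\<exists>C. \<forall>z. \<bar>f z\<bar> \<le> C * nrm z) \<and> open (U :: real set)}"

definition super_delta_wrt :: "('a::real_vector \<Rightarrow> real) \<Rightarrow> 'a \<Rightarrow> bool" where
  "super_delta_wrt nrm x \<longleftrightarrow> nrm x = 1 \<and>
     (\<forall>W. weak_open_wrt nrm W \<and> x \<in> W \<longrightarrow>
        (SUP z \<in> W \<inter> {z. nrm z \<le> 1}. nrm (x - z)) = 2)"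

end

theory Submission
  imports Defs
begin

(* A weakly open neighbourhood of (a x, b y) in the N-sum contains a product A x B of weakly
   open sets around a x and b y, because a bounded functional on the sum splits as
   f (u, v) = f (u, 0) + f (0, v). Scalar multiplication is weakly continuous, so the
   super Delta-property of x and y yields u, v in the unit balls, with (a u, b v) in the
   neighbourhood, and with norm (x - u) and norm (y - v) close to 2. Since an absolute norm is
   monotone and 1-Lipschitz for the l1-norm, the distance N (|a| norm (x - u), |b| norm (y - v))
   is then close to N (2 |a|, 2 |b|) = 2. Only the coordinates with nonzero coefficient are
   used, which gives part (2) as the cases b = 0 and a = 0. *)

definition weak_subbasis :: "('a::real_vector \<Rightarrow> real) \<Rightarrow> 'a set set" where
  "weak_subbasis nrm =
     {{z. f z \<in> U} | f U. linear f \<and> (\<exists>C. \<forall>z. \<bar>f z\<bar> \<le> C * nrm z) \<and> open (U :: real set)}"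

lemma weak_open_wrt_eq_generate: "weak_open_wrt nrm = generate_topology (weak_subbasis nrm)"
  unfolding weak_open_wrt_def weak_subbasis_def ..

lemma weak_open_wrt_UNIV: "weak_open_wrt nrm UNIV"
  by (simp add: weak_open_wrt_eq_generate generate_topology.UNIV)

lemma weak_open_wrt_Int:
  "weak_open_wrt nrm A \<Longrightarrow> weak_open_wrt nrm B \<Longrightarrow> weak_open_wrt nrm (A \<inter> B)"
  by (simp add: weak_open_wrt_eq_generate generate_topology.Int)

lemma weak_open_wrt_Union:
  "(\<And>A. A \<in> K \<Longrightarrow> weak_open_wrt nrm A) \<Longrightarrow> weak_open_wrt nrm (\<Union>K)"
  by (simp add: weak_open_wrt_eq_generate generate_topology.UN)

lemma weak_open_wrt_functional:
  assumes "linear f" "\<And>z. \<bar>f z\<bar> \<le> C * nrm z" "open U"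
  shows "weak_open_wrt nrm {z. f z \<in> U}"
  unfolding weak_open_wrt_eq_generate weak_subbasis_def
  using assms by (intro generate_topology.Basis) blast

lemma weak_open_vimage_bounded_linear:
  fixes T :: "'a::real_normed_vector \<Rightarrow> 'b::real_normed_vector"
  assumes T: "bounded_linear T" and W: "weak_open_wrt norm W"
  shows "weak_open_wrt norm (T -` W)"
proof -
  obtain K where K: "\<And>z. norm (T z) \<le> norm z * K"
    using bounded_linear.bounded[OF T] by blast
  from W have "generate_topology (weak_subbasis norm) W"
    by (simp add: weak_open_wrt_eq_generate)
  then show ?thesis
  proof induction
    case UNIV
    show ?case by (simp add: weak_open_wrt_UNIV)
  next
    case (Int A B)
    then show ?case by (simp add: weak_open_wrt_Int)
  next
    case (UN \<K>)
    then show ?case by (auto simp: vimage_Union intro: weak_open_wrt_Union)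
  next
    case (Basis s)
    then obtain f U C where s: "s = {z. f z \<in> U}" and f: "linear f" "open U"
      and C: "\<And>z. \<bar>f z\<bar> \<le> C * norm z"
      unfolding weak_subbasis_def by blast
    have "\<bar>f (T z)\<bar> \<le> (max C 0 * K) * norm z" for z
    proof -
      have "\<bar>f (T z)\<bar> \<le> max C 0 * norm (T z)"
        using C[of "T z"] by (smt (verit) mult_right_mono norm_ge_zero)
      also have "\<dots> \<le> max C 0 * (norm z * K)"
        using K by (simp add: mult_left_mono)
      finally show ?thesis by (simp add: ac_simps)
    qed
    moreover have "linear (f \<circ> T)"
      using T f(1) by (simp add: bounded_linear.linear linear_compose)
    ultimately have "weak_open_wrt norm {z. (f \<circ> T) z \<in> U}"
      using f(2) by (intro weak_open_wrt_functional) (auto simp: comp_def)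
    then show ?case by (simp add: s vimage_def)
  qed
qed

lemma super_delta_wrtI:
  assumes "nrm x = 1" and "\<And>z. nrm z \<le> 1 \<Longrightarrow> nrm (x - z) \<le> 2"
    and "\<And>W \<epsilon>. weak_open_wrt nrm W \<Longrightarrow> x \<in> W \<Longrightarrow> 0 < \<epsilon> \<Longrightarrow>
           \<exists>z\<in>W. nrm z \<le> 1 \<and> 2 - \<epsilon> < nrm (x - z)"
  shows "super_delta_wrt nrm x"
  unfolding super_delta_wrt_def
proof (intro conjI allI impI assms(1))
  fix W assume W: "weak_open_wrt nrm W \<and> x \<in> W"
  show "(SUP z \<in> W \<inter> {z. nrm z \<le> 1}. nrm (x - z)) = 2"
  proof (rule cSup_eq_non_empty)
    show "(\<lambda>z. nrm (x - z)) ` (W \<inter> {z. nrm z \<le> 1}) \<noteq> {}"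
      using W assms(1) by auto
    show "\<And>r. r \<in> (\<lambda>z. nrm (x - z)) ` (W \<inter> {z. nrm z \<le> 1}) \<Longrightarrow> r \<le> 2"
      using assms(2) by auto
    fix s assume s: "\<And>r. r \<in> (\<lambda>z. nrm (x - z)) ` (W \<inter> {z. nrm z \<le> 1}) \<Longrightarrow> r \<le> s"
    show "2 \<le> s"
    proof (rule ccontr)
      assume "\<not> 2 \<le> s"
      then obtain z where "z \<in> W" "nrm z \<le> 1" "2 - (2 - s) < nrm (x - z)"
        using assms(3)[of W "2 - s"] W by auto
      with s[of "nrm (x - z)"] show False by auto
    qed
  qed
qed

lemma super_delta_wrtD:
  fixes x :: "'a::real_normed_vector"
  assumes "super_delta_wrt norm x" "weak_open_wrt norm A" "x \<in> A" "0 < \<epsilon>"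
  obtains u where "u \<in> A" "norm u \<le> 1" "\<bar>2 - norm (x - u)\<bar> < \<epsilon>"
proof -
  let ?B = "A \<inter> {z. norm z \<le> 1}"
  have x: "norm x = 1" and sup: "(SUP z \<in> ?B. norm (x - z)) = 2"
    using assms(1-3) unfolding super_delta_wrt_def by auto
  have le2: "norm (x - z) \<le> 2" if "norm z \<le> 1" for z
    using norm_triangle_ineq4[of x z] x that by simp
  have "?B \<noteq> {}" and "bdd_above ((\<lambda>z. norm (x - z)) ` ?B)"
    using x assms(3) le2 by (auto intro!: bdd_aboveI2[where M=2])
  then obtain u where "u \<in> ?B" "2 - \<epsilon> < norm (x - u)"
    using less_cSUP_iff[of ?B "\<lambda>z. norm (x - z)" "2 - \<epsilon>"] sup assms(4) by auto
  with le2 that show ?thesis by force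
qed

lemma scaled_super_delta_approx:
  fixes x :: "'a::real_normed_vector"
  assumes x: "a \<noteq> 0 \<Longrightarrow> super_delta_wrt norm x"
    and A: "weak_open_wrt norm A" "a *\<^sub>R x \<in> A" and \<epsilon>: "0 < \<epsilon>"
  obtains u where "a *\<^sub>R u \<in> A" "norm u \<le> 1" "\<bar>a\<bar> * \<bar>2 - norm (x - u)\<bar> \<le> \<bar>a\<bar> * \<epsilon>"
proof (cases "a = 0")
  case True
  then show ?thesis using that[of 0] A(2) by simp
next
  case False
  have "weak_open_wrt norm (scaleR a -` A)"
    using A(1) by (rule weak_open_vimage_bounded_linear[OF bounded_linear_scaleR_right])
  then obtain u where "a *\<^sub>R u \<in> A" "norm u \<le> 1" "\<bar>2 - norm (x - u)\<bar> < \<epsilon>"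
    using super_delta_wrtD[OF x[OF False] _ _ \<epsilon>] A(2) by (metis vimageE vimageI)
  then show ?thesis using that by (simp add: mult_left_mono)
qed

locale absolute_norm =
  fixes N :: "real \<times> real \<Rightarrow> real"
  assumes absolute_normalized: "absolute_normalized_norm N"
begin

lemma homogeneous: "N (c * a, c * b) = \<bar>c\<bar> * N (a, b)"
  using absolute_normalized unfolding absolute_normalized_norm_def is_norm_R2_def by blast

lemma triangle: "N (a + c, b + d) \<le> N (a, b) + N (c, d)"
  using absolute_normalized unfolding absolute_normalized_norm_def is_norm_R2_def by blast

lemma abs_eq: "N (a, b) = N (\<bar>a\<bar>, \<bar>b\<bar>)"
  using absolute_normalized unfolding absolute_normalized_norm_def by blast

lemma fst_eq: "N (t, 0) = \<bar>t\<bar>"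
  using homogeneous[of t 1 0] absolute_normalized unfolding absolute_normalized_norm_def by simp

lemma snd_eq: "N (0, t) = \<bar>t\<bar>"
  using homogeneous[of t 0 1] absolute_normalized unfolding absolute_normalized_norm_def by simp

lemma le_abs_sum: "N (c, d) \<le> \<bar>c\<bar> + \<bar>d\<bar>"
  using triangle[of c 0 0 d] by (simp add: fst_eq snd_eq)

lemma le_add_abs_diff: "N (c, d) \<le> N (c', d') + \<bar>c - c'\<bar> + \<bar>d - d'\<bar>"
  using triangle[of c' "c - c'" d' "d - d'"] le_abs_sum[of "c - c'" "d - d'"] by simp

text \<open>The point \<open>(a, b)\<close> is a convex combination of \<open>(c, b)\<close> and \<open>(-c, b)\<close>, at which \<open>N\<close>
  takes the same value.\<close>
lemma mono_fst:
  assumes "0 \<le> a" "a \<le> c"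
  shows "N (a, b) \<le> N (c, b)"
proof -
  define s where "s = (1 + a / c) / 2"
  have s: "0 \<le> s" "s \<le> 1"
    using assms by (auto simp: s_def divide_le_eq_1)
  have "N (a, b) = N (s * c + (1 - s) * (- c), s * b + (1 - s) * b)"
    using assms by (cases "c = 0") (auto simp: s_def field_simps)
  also have "\<dots> \<le> s * N (c, b) + (1 - s) * N (- c, b)"
    using triangle[of "s * c" "(1 - s) * (- c)" "s * b" "(1 - s) * b"] s
      homogeneous[of s c b] homogeneous[of "1 - s" "- c" b] by simp
  also have "N (- c, b) = N (c, b)"
    by (metis abs_eq abs_minus_cancel)
  finally show ?thesis by (simp add: algebra_simps)
qed

lemma swap: "absolute_norm (\<lambda>(a, b). N (b, a))"
  using absolute_normalized
  unfolding absolute_norm_def absolute_normalized_norm_def is_norm_R2_def by auto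

lemma mono:
  assumes "0 \<le> a" "a \<le> c" "0 \<le> b" "b \<le> d"
  shows "N (a, b) \<le> N (c, d)"
  using mono_fst[of a c b] absolute_norm.mono_fst[OF swap, of b d c] assms by simp

lemma sum_norm_diff_le: "sum_norm N (p - q) \<le> sum_norm N p + sum_norm N q"
proof -
  have "sum_norm N (p - q) \<le> N (norm (fst p) + norm (fst q), norm (snd p) + norm (snd q))"
    unfolding sum_norm_def by (rule mono) (auto intro: norm_triangle_ineq4)
  also have "\<dots> \<le> sum_norm N p + sum_norm N q"
    unfolding sum_norm_def by (rule triangle)
  finally show ?thesis .
qed

lemma weak_subbasis_sum_norm_box:
  fixes s :: "('a::real_normed_vector \<times> 'b::real_normed_vector) set"
  assumes "s \<in> weak_subbasis (sum_norm N)" "(p, q) \<in> s"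
  shows "\<exists>A B. weak_open_wrt norm A \<and> weak_open_wrt norm B \<and> p \<in> A \<and> q \<in> B \<and> A \<times> B \<subseteq> s"
proof -
  obtain f U C where s: "s = {z. f z \<in> U}" and f: "linear f" "open U"
    and C: "\<And>z. \<bar>f z\<bar> \<le> C * sum_norm N z"
    using assms(1) unfolding weak_subbasis_def by blast
  define g where "g u = f (u, 0)" for u :: 'a
  define h where "h v = f (0, v)" for v :: 'b
  have split: "f (u, v) = g u + h v" for u v
    using linear_add[OF f(1), of "(u, 0)" "(0, v)"] by (simp add: g_def h_def)
  have "linear (\<lambda>u::'a. (u, 0::'b))" "linear (\<lambda>v::'b. (0::'a, v))"
    by (auto intro!: bounded_linear.linear bounded_linear_Pair)
  then have lin: "linear g" "linear h"
    using linear_compose[OF _ f(1)] unfolding g_def h_def comp_def by blast+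
  have bnd: "\<bar>g u\<bar> \<le> C * norm u" "\<bar>h v\<bar> \<le> C * norm v" for u v
    using C[of "(u, 0)"] C[of "(0, v)"] by (simp_all add: g_def h_def sum_norm_def fst_eq snd_eq)
  have open_AB: "weak_open_wrt norm {u. g u \<in> ball (g p) (e / 2)}"
    "weak_open_wrt norm {v. h v \<in> ball (h q) (e / 2)}" for e
    using weak_open_wrt_functional[OF lin(1) bnd(1) open_ball]
      weak_open_wrt_functional[OF lin(2) bnd(2) open_ball] by blast+
  obtain e where "0 < e" and e: "ball (g p + h q) e \<subseteq> U"
    using assms(2) f(2) openE by (auto simp: s split)
  have "{u. g u \<in> ball (g p) (e / 2)} \<times> {v. h v \<in> ball (h q) (e / 2)} \<subseteq> s"
  proof safe
    fix u v assume "g u \<in> ball (g p) (e / 2)" "h v \<in> ball (h q) (e / 2)"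
    then have "g u + h v \<in> ball (g p + h q) e"
      by (simp add: dist_triangle_add_half)
    then show "(u, v) \<in> s"
      using e by (auto simp: s split)
  qed
  with open_AB[of e] \<open>0 < e\<close> show ?thesis
    by (intro exI[of _ "{u. g u \<in> ball (g p) (e / 2)}"] exI[of _ "{v. h v \<in> ball (h q) (e / 2)}"]) auto
qed

lemma weak_open_sum_norm_box:
  fixes W :: "('a::real_normed_vector \<times> 'b::real_normed_vector) set"
  assumes "weak_open_wrt (sum_norm N) W" "(p, q) \<in> W"
  shows "\<exists>A B. weak_open_wrt norm A \<and> weak_open_wrt norm B \<and> p \<in> A \<and> q \<in> B \<and> A \<times> B \<subseteq> W"
proof -
  from assms(1) have "generate_topology (weak_subbasis (sum_norm N)) W"
    by (simp add: weak_open_wrt_eq_generate)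
  then show ?thesis
    using assms(2)
  proof (induction arbitrary: p q)
    case UNIV
    show ?case by (blast intro: weak_open_wrt_UNIV)
  next
    case (Int S T)
    obtain A B where "weak_open_wrt norm A" "weak_open_wrt norm B" "p \<in> A" "q \<in> B" "A \<times> B \<subseteq> S"
      using Int.IH(1) Int.prems by blast
    moreover obtain A' B' where "weak_open_wrt norm A'" "weak_open_wrt norm B'" "p \<in> A'" "q \<in> B'"
      "A' \<times> B' \<subseteq> T"
      using Int.IH(2) Int.prems by blast
    ultimately show ?case
      by (intro exI[of _ "A \<inter> A'"] exI[of _ "B \<inter> B'"]) (auto simp: weak_open_wrt_Int)
  next
    case (UN K)
    then obtain k where "k \<in> K" "(p, q) \<in> k"
      by blast
    then obtain A B where "weak_open_wrt norm A" "weak_open_wrt norm B" "p \<in> A" "q \<in> B"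
      "A \<times> B \<subseteq> k"
      using UN.IH by blast
    with \<open>k \<in> K\<close> show ?case
      by blast
  next
    case (Basis s)
    then show ?case by (rule weak_subbasis_sum_norm_box)
  qed
qed

lemma super_delta_sum_norm:
  fixes x :: "'a::real_normed_vector" and y :: "'b::real_normed_vector"
  assumes ab: "N (a, b) = 1"
    and x: "a \<noteq> 0 \<Longrightarrow> super_delta_wrt norm x" and y: "b \<noteq> 0 \<Longrightarrow> super_delta_wrt norm y"
  shows "super_delta_wrt (sum_norm N) (a *\<^sub>R x, b *\<^sub>R y)"
proof (rule super_delta_wrtI)
  have Nab: "N (\<bar>a\<bar>, \<bar>b\<bar>) = 1"
    using ab abs_eq[of a b] by simp
  have "\<bar>a\<bar> * norm x = \<bar>a\<bar>" "\<bar>b\<bar> * norm y = \<bar>b\<bar>"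
    using x y unfolding super_delta_wrt_def by auto
  then have "N (\<bar>a\<bar> * norm x, \<bar>b\<bar> * norm y) = 1"
    by (simp only: Nab)
  then show one: "sum_norm N (a *\<^sub>R x, b *\<^sub>R y) = 1"
    by (simp add: sum_norm_def)
  show "sum_norm N ((a *\<^sub>R x, b *\<^sub>R y) - z) \<le> 2" if "sum_norm N z \<le> 1" for z
    using sum_norm_diff_le[of "(a *\<^sub>R x, b *\<^sub>R y)" z] one that by simp
  fix W and \<epsilon> :: real
  assume W: "weak_open_wrt (sum_norm N) W" "(a *\<^sub>R x, b *\<^sub>R y) \<in> W" and "0 < \<epsilon>"
  then obtain A B where AB: "weak_open_wrt norm A" "weak_open_wrt norm B"
    "a *\<^sub>R x \<in> A" "b *\<^sub>R y \<in> B" "A \<times> B \<subseteq> W"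
    using weak_open_sum_norm_box by blast
  define \<delta> where "\<delta> = \<epsilon> / (\<bar>a\<bar> + \<bar>b\<bar> + 1)"
  have "0 < \<delta>" "(\<bar>a\<bar> + \<bar>b\<bar>) * \<delta> < \<epsilon>"
    using \<open>0 < \<epsilon>\<close> by (auto simp: \<delta>_def field_simps)
  obtain u where u: "a *\<^sub>R u \<in> A" "norm u \<le> 1" "\<bar>a\<bar> * \<bar>2 - norm (x - u)\<bar> \<le> \<bar>a\<bar> * \<delta>"
    using scaled_super_delta_approx[OF x AB(1,3) \<open>0 < \<delta>\<close>] by blast
  obtain v where v: "b *\<^sub>R v \<in> B" "norm v \<le> 1" "\<bar>b\<bar> * \<bar>2 - norm (y - v)\<bar> \<le> \<bar>b\<bar> * \<delta>"
    using scaled_super_delta_approx[OF y AB(2,4) \<open>0 < \<delta>\<close>] by blast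
  have "sum_norm N (a *\<^sub>R u, b *\<^sub>R v) \<le> N (\<bar>a\<bar>, \<bar>b\<bar>)"
    using u(2) v(2) unfolding sum_norm_def
    by (intro mono) (auto simp: mult_left_le)
  moreover have "2 - \<epsilon> < sum_norm N ((a *\<^sub>R x, b *\<^sub>R y) - (a *\<^sub>R u, b *\<^sub>R v))"
  proof -
    have dist: "sum_norm N ((a *\<^sub>R x, b *\<^sub>R y) - (a *\<^sub>R u, b *\<^sub>R v))
                  = N (\<bar>a\<bar> * norm (x - u), \<bar>b\<bar> * norm (y - v))"
      by (simp add: sum_norm_def flip: scaleR_diff_right)
    have "2 = N (\<bar>a\<bar> * 2, \<bar>b\<bar> * 2)"
      using homogeneous[of 2 "\<bar>a\<bar>" "\<bar>b\<bar>"] Nab by (simp add: mult.commute)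
    also have "\<dots> \<le> N (\<bar>a\<bar> * norm (x - u), \<bar>b\<bar> * norm (y - v))
                    + \<bar>a\<bar> * \<bar>2 - norm (x - u)\<bar> + \<bar>b\<bar> * \<bar>2 - norm (y - v)\<bar>"
      using le_add_abs_diff[of "\<bar>a\<bar> * 2" "\<bar>b\<bar> * 2" "\<bar>a\<bar> * norm (x - u)" "\<bar>b\<bar> * norm (y - v)"]
      by (simp add: abs_mult flip: right_diff_distrib)
    also have "\<dots> < sum_norm N ((a *\<^sub>R x, b *\<^sub>R y) - (a *\<^sub>R u, b *\<^sub>R v)) + \<epsilon>"
      using u(3) v(3) \<open>(\<bar>a\<bar> + \<bar>b\<bar>) * \<delta> < \<epsilon>\<close> distrib_right[of "\<bar>a\<bar>" "\<bar>b\<bar>" \<delta>]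
      unfolding dist by linarith
    finally show ?thesis by simp
  qed
  ultimately show "\<exists>z\<in>W. sum_norm N z \<le> 1 \<and> 2 - \<epsilon> < sum_norm N ((a *\<^sub>R x, b *\<^sub>R y) - z)"
    using AB(5) u(1) v(1) Nab by (intro bexI[of _ "(a *\<^sub>R u, b *\<^sub>R v)"]) auto
qed

end

theorem mainTheorem6:
  fixes N :: "real \<times> real \<Rightarrow> real"
  assumes "absolute_normalized_norm N"
  shows "(\<forall>(x::'a::banach) (y::'b::banach) a b.
            super_delta_wrt norm x \<and> super_delta_wrt norm y \<and> N (a, b) = 1 \<longrightarrow>
            super_delta_wrt (sum_norm N) (a *\<^sub>R x, b *\<^sub>R y))
       \<and> (\<forall>x::'a. super_delta_wrt norm x \<longrightarrow> super_delta_wrt (sum_norm N) (x, 0::'b))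
       \<and> (\<forall>y::'b. super_delta_wrt norm y \<longrightarrow> super_delta_wrt (sum_norm N) (0::'a, y))"
proof -
  interpret absolute_norm N
    by (rule absolute_norm.intro) (rule assms)
  have "super_delta_wrt (sum_norm N) (x, 0::'b)" if "super_delta_wrt norm x" for x :: 'a
    using super_delta_sum_norm[of 1 0 x "0::'b"] that by (simp add: fst_eq)
  moreover have "super_delta_wrt (sum_norm N) (0::'a, y)" if "super_delta_wrt norm y" for y :: 'b
    using super_delta_sum_norm[of 0 1 "0::'a" y] that by (simp add: snd_eq)
  moreover have "super_delta_wrt (sum_norm N) (a *\<^sub>R x, b *\<^sub>R y)"
    if "super_delta_wrt norm x" "super_delta_wrt norm y" "N (a, b) = 1" for x :: 'a and y :: 'b and a b
    using that by (simp add: super_delta_sum_norm)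
  ultimately show ?thesis
    by blast
qed

end
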